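(* Let $P$ and $Q$ be causal programs such that for all interpretations $I,J$: $I$ is a causal model of $P^J$ iff $I$ is a causal model of $Q^J$. Then $P$ and $Q$ are strongly equivalent: for every causal program $R$, the programs $P\cup R$ and $Q\cup R$ have the same causal stable models.
   Context: Fix a set of labels $Lb$ and a set of atoms $At$. Terms are built by $t::=l\mid\prod S\mid\sum S\mid t_1\cdot t_2$ with $l\in Lb$ and $S$ any (possibly empty or infinite) set of terms; $1:=\prod\emptyset$, $0:=\sum\emptyset$; finite sums/products written with $+$, $*$. Causal values are equivalence classes of terms modulo the axioms of a completely distributive complete lattice with meet $*$ and join $+$ together with: $t\cdot(u\cdot w)=(t\cdot u)\cdot w$; $t=t+u\cdot t\cdot w$ and $u\cdot t\cdot w=t*u\cdot t\cdot w$; $1\cdot t=t=t\cdot1$; $t\cdot0=0=0\cdot t$; $l\cdot l=l$ for labels $l$; $\cdot$ distributes over (possibly infinite) sums on both sides; for terms $c,d,e$ without $+$: $c\cdot d\cdot e=(c\cdot d)*(d\cdot e)$ if $d\ne1$, $c\cdot(d*e)=(c\cdot d)*(c\cdot e)$, $(c*d)\cdot e=(c\cdot e)*(d\cdot e)$. $\mathbf V$ is the set of values, ordered by $t\le u$ iff $t*u=t$; $\mathbf C\subseteq\mathbf V$ is the set of values with a representative without $+$. $G\le_{\max}t$ means $G\in\mathbf C$, $G\le t$ and no $G'\in\mathbf C$ has $G<G'\le t$. A causal query is $\psi:\mathbf C\times\mathbf V\to\{0,1\}$ with $\psi(G,t)\le\psi(G,u)$ whenever $t\ge u$; monotonic if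 $\psi(G,u)\le\psi(G',w)$ whenever $G\le G'$ (any $u,w$). A causal literal is $(\psi::A)$, $A\in At$. Literals: $(\psi::A)$ (positive), $\neg(\psi::A)$ (negative), $\neg\neg(\psi::A)$ (consistent). A causal program is a set of rules $r:H\leftarrow B_1,\dots,B_m$ with $r\in Lb$ or $r=1$, $H\in At$, each $B_i$ a literal or a term. An interpretation is $I:At\to\mathbf V$, ordered pointwise. $I(\psi::A)=\sum\{G\le_{\max}I(A):\psi(G,I(A))=1\}$; $I(t)=t$ for terms; $I(\neg L)=1$ iff $I(L)=0$ (else $0$); $I(\neg\neg L)=1$ iff $I(L)\ne0$ (else $0$); $I\models L$ iff $I(L)\ne0$. $I$ is a causal model of $P$ iff $(I(B_1)*\dots*I(B_m))\cdot r\le I(H)$ for every rule (empty product $=1$). Reduct: $\psi^t(G,u)=1$ iff there is $G'\in\mathbf C$ with $G'\le G$, $G'\le_{\max}t$, $\psi(G',t)=1$ (else $0$). The reduct of $(\psi::A)$ w.r.t. $I$ is $(\psi::A)$ if $\psi$ is monotonic and $(\psi^{I(A)}::A)$ otherwise. $P^I$: (i) delete every rule whose body has a negative or consistent literal not satisfied by $I$, (ii) delete the remaining negative and consistent literals, (iii) replace each remaining causal literal by its reduct. $P^I$ has a least causal model; $I$ is a causal stable model of $P$ iff $I$ is the least causal model of $P^I$. *)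

theory Defs
  imports Main
begin

text \<open>Causal values form a completely distributive complete lattice (meet = product,
  join = sum, 1 = Inf {} = top, 0 = Sup {} = bot) with labels lab and application
  (the dot operation) app.\<close>

inductive_set vals :: "('l \<Rightarrow> 'v::complete_distrib_lattice) \<Rightarrow> ('v \<Rightarrow> 'v \<Rightarrow> 'v) \<Rightarrow> 'v set"
  for lab app where
  vals_lab: "lab l \<in> vals lab app"
| vals_Inf: "(\<And>s. s \<in> S \<Longrightarrow> s \<in> vals lab app) \<Longrightarrow> Inf S \<in> vals lab app"
| vals_Sup: "(\<And>s. s \<in> S \<Longrightarrow> s \<in> vals lab app) \<Longrightarrow> Sup S \<in> vals lab app"
| vals_app: "c \<in> vals lab app \<Longrightarrow> d \<in> vals lab app \<Longrightarrow> app c d \<in> vals lab app"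

text \<open>The set C: values having a representative term without sums.\<close>
inductive_set cvals :: "('l \<Rightarrow> 'v::complete_distrib_lattice) \<Rightarrow> ('v \<Rightarrow> 'v \<Rightarrow> 'v) \<Rightarrow> 'v set"
  for lab app where
  cvals_lab: "lab l \<in> cvals lab app"
| cvals_Inf: "(\<And>s. s \<in> S \<Longrightarrow> s \<in> cvals lab app) \<Longrightarrow> Inf S \<in> cvals lab app"
| cvals_app: "c \<in> cvals lab app \<Longrightarrow> d \<in> cvals lab app \<Longrightarrow> app c d \<in> cvals lab app"

definition causal_algebra :: "('l \<Rightarrow> 'v::complete_distrib_lattice) \<Rightarrow> ('v \<Rightarrow> 'v \<Rightarrow> 'v) \<Rightarrow> bool" where
  "causal_algebra lab app \<longleftrightarrow>
     vals lab app = UNIV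
   \<and> (\<forall>t u w. app t (app u w) = app (app t u) w)
   \<and> (\<forall>t u w. t = sup t (app (app u t) w))
   \<and> (\<forall>t u w. app (app u t) w = inf t (app (app u t) w))
   \<and> (\<forall>t. app top t = t \<and> app t top = t)
   \<and> (\<forall>t. app t bot = bot \<and> app bot t = bot)
   \<and> (\<forall>l. app (lab l) (lab l) = lab l)
   \<and> (\<forall>t S. app t (Sup S) = Sup ((\<lambda>s. app t s) ` S))
   \<and> (\<forall>t S. app (Sup S) t = Sup ((\<lambda>s. app s t) ` S))
   \<and> (\<forall>c\<in>cvals lab app. \<forall>d\<in>cvals lab app. \<forall>e\<in>cvals lab app.
        (d \<noteq> top \<longrightarrow> app (app c d) e = inf (app c d) (app d e))
      \<and> app c (inf d e) = inf (app c d) (app c e)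
      \<and> app (inf c d) e = inf (app c e) (app d e))"

definition maxle :: "('l \<Rightarrow> 'v::complete_distrib_lattice) \<Rightarrow> ('v \<Rightarrow> 'v \<Rightarrow> 'v) \<Rightarrow> 'v \<Rightarrow> 'v \<Rightarrow> bool" where
  "maxle lab app G t \<longleftrightarrow> G \<in> cvals lab app \<and> G \<le> t
     \<and> \<not> (\<exists>G'\<in>cvals lab app. G < G' \<and> G' \<le> t)"

text \<open>A query is a function psi G t (meaningful for G in C), true = 1, false = 0.\<close>
definition causal_query :: "('l \<Rightarrow> 'v::complete_distrib_lattice) \<Rightarrow> ('v \<Rightarrow> 'v \<Rightarrow> 'v) \<Rightarrow> ('v \<Rightarrow> 'v \<Rightarrow> bool) \<Rightarrow> bool" where
  "causal_query lab app \<psi> \<longleftrightarrow>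
     (\<forall>G\<in>cvals lab app. \<forall>t u. t \<ge> u \<longrightarrow> \<psi> G t \<longrightarrow> \<psi> G u)"

definition monotonic_query :: "('l \<Rightarrow> 'v::complete_distrib_lattice) \<Rightarrow> ('v \<Rightarrow> 'v \<Rightarrow> 'v) \<Rightarrow> ('v \<Rightarrow> 'v \<Rightarrow> bool) \<Rightarrow> bool" where
  "monotonic_query lab app \<psi> \<longleftrightarrow>
     (\<forall>G\<in>cvals lab app. \<forall>G'\<in>cvals lab app. \<forall>u w. G \<le> G' \<longrightarrow> \<psi> G u \<longrightarrow> \<psi> G' w)"

definition query_reduct :: "('l \<Rightarrow> 'v::complete_distrib_lattice) \<Rightarrow> ('v \<Rightarrow> 'v \<Rightarrow> 'v) \<Rightarrow> ('v \<Rightarrow> 'v \<Rightarrow> bool) \<Rightarrow> 'v \<Rightarrow> ('v \<Rightarrow> 'v \<Rightarrow> bool)" where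
  "query_reduct lab app \<psi> t = (\<lambda>G u. \<exists>G'\<in>cvals lab app. G' \<le> G \<and> maxle lab app G' t \<and> \<psi> G' t)"

text \<open>Body elements: positive causal literal (psi::A), negative, consistent (double negation),
  or a term (given by its value).\<close>
datatype ('a, 'v) belem =
    Pos "'v \<Rightarrow> 'v \<Rightarrow> bool" 'a
  | Neg "'v \<Rightarrow> 'v \<Rightarrow> bool" 'a
  | NegNeg "'v \<Rightarrow> 'v \<Rightarrow> bool" 'a
  | Tm 'v

text \<open>A rule r : H <- B1,...,Bm; the label is None for r = 1 and Some l for a label l.\<close>
record ('l, 'a, 'v) crule =
  rlabel :: "'l option"
  rhead :: 'a
  rbody :: "('a, 'v) belem list"

fun belem_query_ok :: "('l \<Rightarrow> 'v::complete_distrib_lattice) \<Rightarrow> ('v \<Rightarrow> 'v \<Rightarrow> 'v) \<Rightarrow> ('a, 'v) belem \<Rightarrow> bool" where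
  "belem_query_ok lab app (Pos \<psi> A) = causal_query lab app \<psi>"
| "belem_query_ok lab app (Neg \<psi> A) = causal_query lab app \<psi>"
| "belem_query_ok lab app (NegNeg \<psi> A) = causal_query lab app \<psi>"
| "belem_query_ok lab app (Tm t) = True"

definition causal_program :: "('l \<Rightarrow> 'v::complete_distrib_lattice) \<Rightarrow> ('v \<Rightarrow> 'v \<Rightarrow> 'v) \<Rightarrow> ('l, 'a, 'v) crule set \<Rightarrow> bool" where
  "causal_program lab app P \<longleftrightarrow> (\<forall>r\<in>P. \<forall>b\<in>set (rbody r). belem_query_ok lab app b)"

definition eval_query :: "('l \<Rightarrow> 'v::complete_distrib_lattice) \<Rightarrow> ('v \<Rightarrow> 'v \<Rightarrow> 'v) \<Rightarrow> ('a \<Rightarrow> 'v) \<Rightarrow> ('v \<Rightarrow> 'v \<Rightarrow> bool) \<Rightarrow> 'a \<Rightarrow> 'v" where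
  "eval_query lab app I \<psi> A = Sup {G. maxle lab app G (I A) \<and> \<psi> G (I A)}"

fun eval_belem :: "('l \<Rightarrow> 'v::complete_distrib_lattice) \<Rightarrow> ('v \<Rightarrow> 'v \<Rightarrow> 'v) \<Rightarrow> ('a \<Rightarrow> 'v) \<Rightarrow> ('a, 'v) belem \<Rightarrow> 'v" where
  "eval_belem lab app I (Pos \<psi> A) = eval_query lab app I \<psi> A"
| "eval_belem lab app I (Neg \<psi> A) = (if eval_query lab app I \<psi> A = bot then top else bot)"
| "eval_belem lab app I (NegNeg \<psi> A) = (if eval_query lab app I \<psi> A \<noteq> bot then top else bot)"
| "eval_belem lab app I (Tm t) = t"

definition rule_label_val :: "('l \<Rightarrow> 'v::complete_distrib_lattice) \<Rightarrow> 'l option \<Rightarrow> 'v" where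
  "rule_label_val lab r = (case r of None \<Rightarrow> top | Some l \<Rightarrow> lab l)"

definition causal_model :: "('l \<Rightarrow> 'v::complete_distrib_lattice) \<Rightarrow> ('v \<Rightarrow> 'v \<Rightarrow> 'v) \<Rightarrow> ('l, 'a, 'v) crule set \<Rightarrow> ('a \<Rightarrow> 'v) \<Rightarrow> bool" where
  "causal_model lab app P I \<longleftrightarrow>
     (\<forall>r\<in>P. app (Inf (eval_belem lab app I ` set (rbody r))) (rule_label_val lab (rlabel r)) \<le> I (rhead r))"

fun is_negative_or_consistent :: "('a, 'v) belem \<Rightarrow> bool" where
  "is_negative_or_consistent (Neg \<psi> A) = True"
| "is_negative_or_consistent (NegNeg \<psi> A) = True"
| "is_negative_or_consistent _ = False"

fun reduct_belem :: "('l \<Rightarrow> 'v::complete_distrib_lattice) \<Rightarrow> ('v \<Rightarrow> 'v \<Rightarrow> 'v) \<Rightarrow> ('a \<Rightarrow> 'v) \<Rightarrow> ('a, 'v) belem \<Rightarrow> ('a, 'v) belem" where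
  "reduct_belem lab app I (Pos \<psi> A) =
     (if monotonic_query lab app \<psi> then Pos \<psi> A else Pos (query_reduct lab app \<psi> (I A)) A)"
| "reduct_belem lab app I b = b"

definition reduct_rule :: "('l \<Rightarrow> 'v::complete_distrib_lattice) \<Rightarrow> ('v \<Rightarrow> 'v \<Rightarrow> 'v) \<Rightarrow> ('a \<Rightarrow> 'v) \<Rightarrow> ('l, 'a, 'v) crule \<Rightarrow> ('l, 'a, 'v) crule" where
  "reduct_rule lab app I r =
     r\<lparr>rbody := map (reduct_belem lab app I) (filter (\<lambda>b. \<not> is_negative_or_consistent b) (rbody r))\<rparr>"

definition reduct :: "('l \<Rightarrow> 'v::complete_distrib_lattice) \<Rightarrow> ('v \<Rightarrow> 'v \<Rightarrow> 'v) \<Rightarrow> ('l, 'a, 'v) crule set \<Rightarrow> ('a \<Rightarrow> 'v) \<Rightarrow> ('l, 'a, 'v) crule set" where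
  "reduct lab app P I =
     reduct_rule lab app I ` {r \<in> P. \<forall>b\<in>set (rbody r).
        is_negative_or_consistent b \<longrightarrow> eval_belem lab app I b \<noteq> bot}"

definition causal_stable_model :: "('l \<Rightarrow> 'v::complete_distrib_lattice) \<Rightarrow> ('v \<Rightarrow> 'v \<Rightarrow> 'v) \<Rightarrow> ('l, 'a, 'v) crule set \<Rightarrow> ('a \<Rightarrow> 'v) \<Rightarrow> bool" where
  "causal_stable_model lab app P I \<longleftrightarrow>
     causal_model lab app (reduct lab app P I) I
   \<and> (\<forall>J. causal_model lab app (reduct lab app P I) J \<longrightarrow> I \<le> J)"

end

theory Submission
  imports Defs
begin

text \<open>The reduct distributes over union, and so does being a causal model. Hence the hypothesis
  gives, for every $R$ and $I$, the same causal models for $(P \cup R)^I$ and $(Q \cup R)^I$;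
  stable models are determined by these model sets alone.\<close>

lemma reduct_union:
  "reduct lab app (P \<union> R) I = reduct lab app P I \<union> reduct lab app R I"
  unfolding reduct_def by blast

lemma causal_model_union:
  "causal_model lab app (P \<union> R) I \<longleftrightarrow> causal_model lab app P I \<and> causal_model lab app R I"
  unfolding causal_model_def by blast

lemma causal_stable_model_cong:
  assumes "\<And>J. causal_model lab app (reduct lab app P I) J \<longleftrightarrow> causal_model lab app (reduct lab app Q I) J"
  shows "causal_stable_model lab app P I \<longleftrightarrow> causal_stable_model lab app Q I"
  unfolding causal_stable_model_def using assms by simp

theorem mainTheorem16:
  fixes lab :: "'l \<Rightarrow> 'v::complete_distrib_lattice"
    and app :: "'v \<Rightarrow> 'v \<Rightarrow> 'v"
    and P Q :: "('l, 'a, 'v) crule set"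
  assumes "causal_algebra lab app"
    and "causal_program lab app P"
    and "causal_program lab app Q"
    and "\<forall>I J. causal_model lab app (reduct lab app P J) I \<longleftrightarrow> causal_model lab app (reduct lab app Q J) I"
  shows "\<forall>R. causal_program lab app R \<longrightarrow>
           (\<forall>I. causal_stable_model lab app (P \<union> R) I \<longleftrightarrow> causal_stable_model lab app (Q \<union> R) I)"
proof (intro allI impI)
  fix R I
  show "causal_stable_model lab app (P \<union> R) I \<longleftrightarrow> causal_stable_model lab app (Q \<union> R) I"
  proof (rule causal_stable_model_cong)
    fix J
    show "causal_model lab app (reduct lab app (P \<union> R) I) J \<longleftrightarrow>
          causal_model lab app (reduct lab app (Q \<union> R) I) J"
      using assms(4) by (simp add: reduct_union causal_model_union)
  qed
qed

end
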